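(* Suppose Assumption A holds and Assumption B holds with $p=3$. Let $\{(x^k,m^k)\}_{k\ge0}$ be generated by Algorithm 1 with $q=2$, step sizes $\{\eta_k\}_{k\ge0}$, and parameters $\{(\gamma_{k,t},\theta_{k,t})\}_{1\le t\le2,k\ge0}$ satisfying, for all $k\ge0$, \[ \frac{\theta_{k,1}}{\gamma_{k,1}}+\frac{\theta_{k,2}}{\gamma_{k,2}}=1,\qquad \frac{\theta_{k,1}}{\gamma_{k,1}^2}+\frac{\theta_{k,2}}{\gamma_{k,2}^2}=1,\qquad \theta_{k,1}+\theta_{k,2}\in(0,1). \] Then for all $k\ge0$, \[ \mathbb{E}_{\xi^{k+1}}[\|m^{k+1}-\nabla f(x^{k+1})\|^2]\le(1-\theta_{k,1}-\theta_{k,2})\|m^k-\nabla f(x^k)\|^2+\frac{L_3^2\eta_k^6\theta_{k,1}^2}{12\gamma_{k,1}^6(\theta_{k,1}+\theta_{k,2})}+\frac{L_3^2\eta_k^6\theta_{k,2}^2}{12\gamma_{k,2}^6(\theta_{k,1}+\theta_{k,2})}+\frac{L_3^2\eta_k^6}{12(\theta_{k,1}+\theta_{k,2})}+2(\theta_{k,1}^2+\theta_{k,2}^2)\sigma^2 . \]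
   Context: Problem: minimize $f:\mathbb{R}^n\to\mathbb{R}$, where only a stochastic gradient estimator $G(\cdot;\xi)$ is accessible, $\xi$ being a random variable with sample space $\Xi$. $\|\cdot\|$ is the Euclidean norm. Assumption A: (a) there is a finite $f_{\mathrm{low}}$ with $f(x)\ge f_{\mathrm{low}}$ for all $x$; (b) there is $L_1>0$ with $\|\nabla f(y)-\nabla f(x)\|\le L_1\|y-x\|$ for all $x,y$; (c) $\mathbb{E}_\xi[G(x;\xi)]=\nabla f(x)$ and $\mathbb{E}_\xi[\|G(x;\xi)-\nabla f(x)\|^2]\le\sigma^2$ for all $x$, for some $\sigma>0$. Assumption B: $f$ is $p$ times continuously differentiable for some $p\ge2$ and there is $L_p>0$ with $\|D^pf(y)-D^pf(x)\|_{(p)}\le L_p\|y-x\|$ for all $x,y$, where $D^pf(x)$ is the $p$th derivative as a symmetric $p$-linear form and $\|\mathcal{T}\|_{(p)}=\max\{\mathcal{T}[h_1,\dots,h_p]:\|h_i\|\le 1\}$. Algorithm 1 (SFOM with multi-extrapolated momentum): inputs $x^0\in\mathbb{R}^n$, step sizes $\eta_k>0$, an integer $q\ge1$, extrapolation parameters $\gamma_{k,t}\in(0,1)$ and weighting parameters $\theta_{k,t}\in\mathbb{R}$ ($1\le t\le q$, $k\ge0$) with $\sum_{t=1}^q\theta_{k,t}\in(0,1)$ for all $k\ge0$. Initialize $x^{-1}=x^0$, $m^{-1}=0$, $(\gamma_{-1,t},\theta_{-1,t})=(1,1/q)$ for all $t$. For $k=0,1,2,\dots$: $z^{k,t}=x^k+\frac{1-\gamma_{k-1,t}}{\gamma_{k-1,t}}(x^k-x^{k-1})$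 for $1\le t\le q$; $m^k=(1-\sum_{t=1}^q\theta_{k-1,t})m^{k-1}+\sum_{t=1}^q\theta_{k-1,t}G(z^{k,t};\xi^k)$; $x^{k+1}=x^k-\eta_k m^k/\|m^k\|$. Here $\xi^0,\xi^1,\dots$ are independent samples of $\xi$ (and $m^k\neq0$ is implicitly assumed). $\mathbb{E}_{\xi^{k+1}}[\cdot]$ denotes expectation with respect to $\xi^{k+1}$ conditional on $\xi^0,\dots,\xi^k$. *)

theory Defs
  imports "HOL-Probability.Probability"
begin

text \<open>The state at iteration k is
(x^k, x^{k-1}, m^k).  The parameters gamma k t, theta k t stand for gamma_{k,t}, theta_{k,t}
for k >= 0; the initial values gamma_{-1,t} = 1, theta_{-1,t} = 1/q are hard-coded in the
case k = 0.  xi k is the sample xi^k.\<close>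

fun sfom_state ::
  "('a::real_normed_vector \<Rightarrow> 'b \<Rightarrow> 'a) \<Rightarrow> 'a \<Rightarrow> (nat \<Rightarrow> real) \<Rightarrow> nat \<Rightarrow>
   (nat \<Rightarrow> nat \<Rightarrow> real) \<Rightarrow> (nat \<Rightarrow> nat \<Rightarrow> real) \<Rightarrow> (nat \<Rightarrow> 'b) \<Rightarrow> nat \<Rightarrow> 'a \<times> 'a \<times> 'a"
where
  "sfom_state G x0 eta q gamma theta xi 0 =
     (let z = (\<lambda>t. x0 + ((1 - 1) / 1) *\<^sub>R (x0 - x0));
          m0 = (1 - (\<Sum>t\<in>{1..q}. 1 / real q)) *\<^sub>R 0
               + (\<Sum>t\<in>{1..q}. (1 / real q) *\<^sub>R G (z t) (xi 0))
      in (x0, x0, m0))"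
| "sfom_state G x0 eta q gamma theta xi (Suc k) =
     (let (xk, xkm1, mk) = sfom_state G x0 eta q gamma theta xi k;
          xk1 = xk - (eta k / norm mk) *\<^sub>R mk;
          z = (\<lambda>t. xk1 + ((1 - gamma k t) / gamma k t) *\<^sub>R (xk1 - xk));
          mk1 = (1 - (\<Sum>t\<in>{1..q}. theta k t)) *\<^sub>R mk
                + (\<Sum>t\<in>{1..q}. theta k t *\<^sub>R G (z t) (xi (Suc k)))
      in (xk1, xk, mk1))"

definition sfom_x where
  "sfom_x G x0 eta q gamma theta xi k = fst (sfom_state G x0 eta q gamma theta xi k)"

definition sfom_m where
  "sfom_m G x0 eta q gamma theta xi k = snd (snd (sfom_state G x0 eta q gamma theta xi k))"

end

theory Submission
  imports Defs
begin

text \<open>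
  Write \<open>x'\<close>, \<open>m'\<close> for the new iterate and momentum and \<open>S = \<theta>\<^sub>1 + \<theta>\<^sub>2\<close>. Then
  \<open>m' - \<nabla>f(x') = (1 - S)(m - \<nabla>f(x)) + B + N\<close> with centred noise
  \<open>N = \<Sum>\<^sub>t \<theta>\<^sub>t (G(z\<^sub>t) - \<nabla>f(z\<^sub>t))\<close> and deterministic bias
  \<open>B = (1 - S)\<nabla>f(x) + \<Sum>\<^sub>t \<theta>\<^sub>t \<nabla>f(z\<^sub>t) - \<nabla>f(x')\<close>. Being centred, the noise adds at
  most \<open>2(\<theta>\<^sub>1\<^sup>2 + \<theta>\<^sub>2\<^sup>2)\<sigma>\<^sup>2\<close> in mean square. The points \<open>x, z\<^sub>1, z\<^sub>2\<close> lie on the line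
  through \<open>x'\<close>, and the two parameter conditions say exactly that the weights
  \<open>1 - S, \<theta>\<^sub>1, \<theta>\<^sub>2\<close> annihilate the constant, linear and quadratic Taylor terms of
  \<open>\<nabla>f\<close> along that line, so \<open>B\<close> is a combination of third-order remainders of size
  \<open>L\<^sub>3\<eta>\<^sup>3/(6\<gamma>\<^sub>t\<^sup>3)\<close>. Convexity of the squared norm,
  \<open>\<parallel>(1 - S)a + B\<parallel>\<^sup>2 \<le> (1 - S)\<parallel>a\<parallel>\<^sup>2 + \<parallel>B\<parallel>\<^sup>2/S\<close>, finishes the estimate.
\<close>

lemma abs_le_by_derivative_comparison:
  fixes g h g' h' :: "real \<Rightarrow> real"
  assumes "0 \<le> t" and "g 0 = 0" and "h 0 = 0"
    and g: "\<And>x. 0 \<le> x \<Longrightarrow> x \<le> t \<Longrightarrow> (g has_real_derivative g' x) (at x)"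
    and h: "\<And>x. 0 \<le> x \<Longrightarrow> x \<le> t \<Longrightarrow> (h has_real_derivative h' x) (at x)"
    and bound: "\<And>x. 0 \<le> x \<Longrightarrow> x \<le> t \<Longrightarrow> \<bar>g' x\<bar> \<le> h' x"
  shows "\<bar>g t\<bar> \<le> h t"
proof -
  have "(\<lambda>x. h x - g x) 0 \<le> (\<lambda>x. h x - g x) t"
  proof (rule DERIV_nonneg_imp_nondecreasing[OF \<open>0 \<le> t\<close>])
    fix x assume "0 \<le> x" "x \<le> t"
    then show "\<exists>y. ((\<lambda>x. h x - g x) has_real_derivative y) (at x) \<and> 0 \<le> y"
      using g h bound[of x] by (intro exI[of _ "h' x - g' x"]) (auto intro: DERIV_diff)
  qed
  moreover have "(\<lambda>x. h x + g x) 0 \<le> (\<lambda>x. h x + g x) t"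
  proof (rule DERIV_nonneg_imp_nondecreasing[OF \<open>0 \<le> t\<close>])
    fix x assume "0 \<le> x" "x \<le> t"
    then show "\<exists>y. ((\<lambda>x. h x + g x) has_real_derivative y) (at x) \<and> 0 \<le> y"
      using g h bound[of x] by (intro exI[of _ "h' x + g' x"]) (auto intro: DERIV_add)
  qed
  ultimately show ?thesis
    using assms(2,3) by simp
qed

lemma taylor_second_order_remainder_nonneg:
  fixes \<phi> \<phi>1 \<phi>2 :: "real \<Rightarrow> real"
  assumes d0: "\<And>t. (\<phi> has_real_derivative \<phi>1 t) (at t)"
    and d1: "\<And>t. (\<phi>1 has_real_derivative \<phi>2 t) (at t)"
    and lip: "\<And>t. 0 \<le> t \<Longrightarrow> \<bar>\<phi>2 t - \<phi>2 0\<bar> \<le> L * t"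
    and "0 \<le> t"
  shows "\<bar>\<phi> t - \<phi> 0 - t * \<phi>1 0 - t\<^sup>2 / 2 * \<phi>2 0\<bar> \<le> L * t ^ 3 / 6"
proof (rule abs_le_by_derivative_comparison[OF \<open>0 \<le> t\<close>])
  fix s :: real assume "0 \<le> s"
  show "\<bar>\<phi>1 s - \<phi>1 0 - s * \<phi>2 0\<bar> \<le> L * s\<^sup>2 / 2"
  proof (rule abs_le_by_derivative_comparison[OF \<open>0 \<le> s\<close>])
    show "((\<lambda>x. \<phi>1 x - \<phi>1 0 - x * \<phi>2 0) has_real_derivative \<phi>2 x - \<phi>2 0) (at x)" for x
      by (rule derivative_eq_intros d1 refl | simp)+
    show "((\<lambda>x. L * x\<^sup>2 / 2) has_real_derivative L * x) (at x)" for x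
      by (rule derivative_eq_intros refl | simp)+
  qed (use lip in auto)
next
  show "((\<lambda>x. \<phi> x - \<phi> 0 - x * \<phi>1 0 - x\<^sup>2 / 2 * \<phi>2 0)
          has_real_derivative \<phi>1 x - \<phi>1 0 - x * \<phi>2 0) (at x)" for x
    by (rule derivative_eq_intros d0 refl | simp)+
  show "((\<lambda>x. L * x ^ 3 / 6) has_real_derivative L * x\<^sup>2 / 2) (at x)" for x
    by (rule derivative_eq_intros refl | simp)+
qed simp_all

lemma taylor_second_order_remainder:
  fixes \<phi> \<phi>1 \<phi>2 :: "real \<Rightarrow> real"
  assumes d0: "\<And>t. (\<phi> has_real_derivative \<phi>1 t) (at t)"
    and d1: "\<And>t. (\<phi>1 has_real_derivative \<phi>2 t) (at t)"
    and lip: "\<And>t. \<bar>\<phi>2 t - \<phi>2 0\<bar> \<le> L * \<bar>t\<bar>"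
  shows "\<bar>\<phi> t - \<phi> 0 - t * \<phi>1 0 - t\<^sup>2 / 2 * \<phi>2 0\<bar> \<le> L * \<bar>t\<bar> ^ 3 / 6"
proof (cases "0 \<le> t")
  case True
  have "\<bar>\<phi> t - \<phi> 0 - t * \<phi>1 0 - t\<^sup>2 / 2 * \<phi>2 0\<bar> \<le> L * t ^ 3 / 6"
    using lip by (intro taylor_second_order_remainder_nonneg[OF d0 d1 _ True]) (metis abs_of_nonneg)
  with True show ?thesis
    by simp
next
  case False
  have "((\<lambda>x. \<phi> (- x)) has_real_derivative - \<phi>1 (- s)) (at s)" for s
    using DERIV_chain2[OF d0 DERIV_minus[OF DERIV_ident]] by simp
  moreover have "((\<lambda>x. - \<phi>1 (- x)) has_real_derivative \<phi>2 (- s)) (at s)" for s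
    using DERIV_minus[OF DERIV_chain2[OF d1 DERIV_minus[OF DERIV_ident]]] by simp
  ultimately have "\<bar>\<phi> (- (- t)) - \<phi> (- 0) - (- t) * (- \<phi>1 (- 0)) - (- t)\<^sup>2 / 2 * \<phi>2 (- 0)\<bar>
      \<le> L * (- t) ^ 3 / 6"
    using False lip by (intro taylor_second_order_remainder_nonneg) (auto, metis abs_minus_cancel abs_of_nonneg)
  then show ?thesis
    using False by simp
qed

lemma weighted_taylor_second_order_remainder:
  fixes \<phi> \<phi>1 \<phi>2 :: "real \<Rightarrow> real"
  assumes d0: "\<And>t. (\<phi> has_real_derivative \<phi>1 t) (at t)"
    and d1: "\<And>t. (\<phi>1 has_real_derivative \<phi>2 t) (at t)"
    and lip: "\<And>t. \<bar>\<phi>2 t - \<phi>2 0\<bar> \<le> L * \<bar>t\<bar>"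
    and moment0: "(\<Sum>i\<in>I. w i) = 1"
    and moment1: "(\<Sum>i\<in>I. w i * s i) = 0"
    and moment2: "(\<Sum>i\<in>I. w i * (s i)\<^sup>2) = 0"
  shows "\<bar>(\<Sum>i\<in>I. w i * \<phi> (s i)) - \<phi> 0\<bar> \<le> L / 6 * (\<Sum>i\<in>I. \<bar>w i\<bar> * \<bar>s i\<bar> ^ 3)"
proof -
  define R where "R t = \<phi> t - \<phi> 0 - t * \<phi>1 0 - t\<^sup>2 / 2 * \<phi>2 0" for t
  have "(\<Sum>i\<in>I. w i * R (s i))
      = (\<Sum>i\<in>I. w i * \<phi> (s i)) - (\<Sum>i\<in>I. w i) * \<phi> 0
        - (\<Sum>i\<in>I. w i * s i) * \<phi>1 0 - (\<Sum>i\<in>I. w i * (s i)\<^sup>2) / 2 * \<phi>2 0"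
    by (simp add: R_def sum_subtractf sum.distrib sum_distrib_left sum_distrib_right sum_divide_distrib
        right_diff_distrib mult_ac)
  then have "(\<Sum>i\<in>I. w i * \<phi> (s i)) - \<phi> 0 = (\<Sum>i\<in>I. w i * R (s i))"
    by (simp add: moment0 moment1 moment2)
  also have "\<bar>\<dots>\<bar> \<le> (\<Sum>i\<in>I. \<bar>w i\<bar> * \<bar>R (s i)\<bar>)"
    by (rule order.trans[OF sum_abs]) (simp add: abs_mult)
  also have "\<dots> \<le> (\<Sum>i\<in>I. \<bar>w i\<bar> * (L * \<bar>s i\<bar> ^ 3 / 6))"
    unfolding R_def
    by (intro sum_mono mult_left_mono taylor_second_order_remainder[OF d0 d1 lip]) simp
  finally show ?thesis
    by (simp add: sum_distrib_left algebra_simps)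
qed

lemma has_real_derivative_along_line:
  fixes g :: "'a::real_normed_vector \<Rightarrow> real"
  assumes "\<And>x. (g has_derivative g' x) (at x)"
  shows "((\<lambda>t. g (y + t *\<^sub>R u)) has_real_derivative g' (y + t *\<^sub>R u) u) (at t)"
proof -
  have "((\<lambda>t. y + t *\<^sub>R u) has_derivative (\<lambda>h. h *\<^sub>R u)) (at t)"
    by (rule derivative_eq_intros refl | simp)+
  from diff_chain_at[OF this assms]
  have "((\<lambda>t. g (y + t *\<^sub>R u)) has_derivative (\<lambda>h. g' (y + t *\<^sub>R u) (h *\<^sub>R u))) (at t)"
    by (simp add: o_def)
  moreover have "g' (y + t *\<^sub>R u) (h *\<^sub>R u) = g' (y + t *\<^sub>R u) u * h" for h
    using linear_scale[OF has_derivative_linear[OF assms]] by simp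
  ultimately show ?thesis
    by (simp add: has_field_derivative_def)
qed

lemma two_point_extrapolation_moments:
  fixes \<gamma>1 \<gamma>2 \<theta>1 \<theta>2 :: real
  assumes "\<gamma>1 \<noteq> 0" "\<gamma>2 \<noteq> 0"
    and par1: "\<theta>1 / \<gamma>1 + \<theta>2 / \<gamma>2 = 1"
    and par2: "\<theta>1 / \<gamma>1\<^sup>2 + \<theta>2 / \<gamma>2\<^sup>2 = 1"
  shows "- (1 - \<theta>1 - \<theta>2) + \<theta>1 * ((1 - \<gamma>1) / \<gamma>1) + \<theta>2 * ((1 - \<gamma>2) / \<gamma>2) = 0"
    and "(1 - \<theta>1 - \<theta>2) + \<theta>1 * ((1 - \<gamma>1) / \<gamma>1)\<^sup>2 + \<theta>2 * ((1 - \<gamma>2) / \<gamma>2)\<^sup>2 = 0"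
proof -
  have "\<theta> * ((1 - \<gamma>) / \<gamma>) = \<theta> / \<gamma> - \<theta>"
    and "\<theta> * ((1 - \<gamma>) / \<gamma>)\<^sup>2 = \<theta> / \<gamma>\<^sup>2 - 2 * (\<theta> / \<gamma>) + \<theta>"
    if "\<gamma> \<noteq> 0" for \<gamma> \<theta> :: real
    using that by (simp_all add: field_simps power2_eq_square)
  then show "- (1 - \<theta>1 - \<theta>2) + \<theta>1 * ((1 - \<gamma>1) / \<gamma>1) + \<theta>2 * ((1 - \<gamma>2) / \<gamma>2) = 0"
    and "(1 - \<theta>1 - \<theta>2) + \<theta>1 * ((1 - \<gamma>1) / \<gamma>1)\<^sup>2 + \<theta>2 * ((1 - \<gamma>2) / \<gamma>2)\<^sup>2 = 0"
    using assms by simp_all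
qed

locale lipschitz_third_derivative =
  fixes gradf :: "'a::real_inner \<Rightarrow> 'a"
    and D2f :: "'a \<Rightarrow> 'a \<Rightarrow> 'a \<Rightarrow> real"
    and D3f :: "'a \<Rightarrow> 'a \<Rightarrow> 'a \<Rightarrow> 'a \<Rightarrow> real"
    and L :: real
  assumes has_derivative_D2f: "\<And>x h1. ((\<lambda>y. gradf y \<bullet> h1) has_derivative D2f x h1) (at x)"
    and has_derivative_D3f: "\<And>x h1 h2. ((\<lambda>y. D2f y h1 h2) has_derivative D3f x h1 h2) (at x)"
    and D3f_lipschitz: "\<And>x y h1 h2 h3. norm h1 \<le> 1 \<Longrightarrow> norm h2 \<le> 1 \<Longrightarrow> norm h3 \<le> 1 \<Longrightarrow>
          D3f y h1 h2 h3 - D3f x h1 h2 h3 \<le> L * norm (y - x)"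
begin

lemma norm_weighted_gradient_taylor:
  assumes "norm u = 1"
    and "(\<Sum>i\<in>I. w i) = 1" "(\<Sum>i\<in>I. w i * s i) = 0" "(\<Sum>i\<in>I. w i * (s i)\<^sup>2) = 0"
  shows "norm ((\<Sum>i\<in>I. w i *\<^sub>R gradf (y + s i *\<^sub>R u)) - gradf y)
    \<le> L / 6 * (\<Sum>i\<in>I. \<bar>w i\<bar> * \<bar>s i\<bar> ^ 3)"
proof -
  define B where "B = (\<Sum>i\<in>I. w i *\<^sub>R gradf (y + s i *\<^sub>R u)) - gradf y"
  \<comment> \<open>Testing against the direction of \<open>B\<close> reduces the claim to a scalar Taylor estimate.\<close>
  define v where "v = sgn B"
  have "norm v \<le> 1"
    by (simp add: v_def norm_sgn)
  define \<phi> where "\<phi> t = gradf (y + t *\<^sub>R u) \<bullet> v" for t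
  have "norm B = B \<bullet> v"
    by (cases "B = 0") (simp_all add: v_def sgn_div_norm power2_norm_eq_inner[symmetric] power2_eq_square)
  also have "\<dots> = (\<Sum>i\<in>I. w i * \<phi> (s i)) - \<phi> 0"
    by (simp add: B_def \<phi>_def inner_diff_left inner_sum_left)
  also have "\<dots> \<le> L / 6 * (\<Sum>i\<in>I. \<bar>w i\<bar> * \<bar>s i\<bar> ^ 3)"
  proof (rule order.trans[OF abs_ge_self weighted_taylor_second_order_remainder])
    show "(\<phi> has_real_derivative D2f (y + t *\<^sub>R u) v u) (at t)" for t
      unfolding \<phi>_def by (rule has_real_derivative_along_line[OF has_derivative_D2f])
    show "((\<lambda>t. D2f (y + t *\<^sub>R u) v u) has_real_derivative D3f (y + t *\<^sub>R u) v u u) (at t)" for t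
      by (rule has_real_derivative_along_line[OF has_derivative_D3f])
    show "\<bar>D3f (y + t *\<^sub>R u) v u u - D3f (y + 0 *\<^sub>R u) v u u\<bar> \<le> L * \<bar>t\<bar>" for t
      using D3f_lipschitz[of v u u y "y + t *\<^sub>R u"] D3f_lipschitz[of v u u "y + t *\<^sub>R u" y]
        \<open>norm v \<le> 1\<close> \<open>norm u = 1\<close>
      by (simp add: abs_le_iff)
  qed (use assms in auto)
  finally show ?thesis
    by (simp add: B_def)
qed

lemma power2_norm_weighted_gradient_taylor:
  assumes "norm u = 1"
    and "(\<Sum>i\<in>I. w i) = 1" "(\<Sum>i\<in>I. w i * s i) = 0" "(\<Sum>i\<in>I. w i * (s i)\<^sup>2) = 0"
  shows "(norm ((\<Sum>i\<in>I. w i *\<^sub>R gradf (y + s i *\<^sub>R u)) - gradf y))\<^sup>2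
    \<le> card I * (L\<^sup>2 / 36) * (\<Sum>i\<in>I. (w i)\<^sup>2 * s i ^ 6)"
proof -
  have "(norm ((\<Sum>i\<in>I. w i *\<^sub>R gradf (y + s i *\<^sub>R u)) - gradf y))\<^sup>2
      \<le> (\<Sum>i\<in>I. L / 6 * (\<bar>w i\<bar> * \<bar>s i\<bar> ^ 3))\<^sup>2"
    using norm_weighted_gradient_taylor[OF assms] by (intro power_mono) (simp_all add: sum_distrib_left)
  also have "\<dots> \<le> (\<Sum>i\<in>I. (L / 6 * (\<bar>w i\<bar> * \<bar>s i\<bar> ^ 3))\<^sup>2) * card I"
    by (rule sum_squared_le_sum_of_squares)
  also have "\<dots> = card I * (L\<^sup>2 / 36) * (\<Sum>i\<in>I. (w i)\<^sup>2 * s i ^ 6)"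
    by (simp add: sum_distrib_left power_mult_distrib power_divide mult_ac flip: power_mult)
  finally show ?thesis .
qed

lemma two_point_extrapolation_bias:
  fixes x y :: 'a and \<eta> \<gamma>1 \<gamma>2 \<theta>1 \<theta>2 :: real
  assumes "norm (y - x) = \<eta>" "0 < \<eta>"
    and \<gamma>1: "0 < \<gamma>1" "\<gamma>1 \<le> 1" and \<gamma>2: "0 < \<gamma>2" "\<gamma>2 \<le> 1"
    and par1: "\<theta>1 / \<gamma>1 + \<theta>2 / \<gamma>2 = 1"
    and par2: "\<theta>1 / \<gamma>1\<^sup>2 + \<theta>2 / \<gamma>2\<^sup>2 = 1"
    and "\<bar>1 - \<theta>1 - \<theta>2\<bar> \<le> 1"
  shows "(norm ((1 - \<theta>1 - \<theta>2) *\<^sub>R gradf x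
      + \<theta>1 *\<^sub>R gradf (y + ((1 - \<gamma>1) / \<gamma>1) *\<^sub>R (y - x))
      + \<theta>2 *\<^sub>R gradf (y + ((1 - \<gamma>2) / \<gamma>2) *\<^sub>R (y - x)) - gradf y))\<^sup>2
    \<le> L\<^sup>2 * \<eta> ^ 6 * \<theta>1\<^sup>2 / (12 * \<gamma>1 ^ 6) + L\<^sup>2 * \<eta> ^ 6 * \<theta>2\<^sup>2 / (12 * \<gamma>2 ^ 6)
      + L\<^sup>2 * \<eta> ^ 6 / 12"
proof -
  define u where "u = (1 / \<eta>) *\<^sub>R (y - x)"
  have "norm u = 1" and yx: "y - x = \<eta> *\<^sub>R u"
    using assms(1,2) by (simp_all add: u_def)
  define c where "c \<gamma> = (1 - \<gamma>) / \<gamma>" for \<gamma> :: real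
  define w where "w i = (if i = 0 then 1 - \<theta>1 - \<theta>2 else if i = 1 then \<theta>1 else \<theta>2)" for i :: nat
  define s where "s i = (if i = 0 then - \<eta> else if i = 1 then c \<gamma>1 * \<eta> else c \<gamma>2 * \<eta>)" for i :: nat
  note moments = two_point_extrapolation_moments[OF _ _ par1 par2, folded c_def]
  have "(\<Sum>i\<in>{0,1,2}. w i * s i) = \<eta> * (- (1 - \<theta>1 - \<theta>2) + \<theta>1 * c \<gamma>1 + \<theta>2 * c \<gamma>2)"
    and "(\<Sum>i\<in>{0,1,2}. w i * (s i)\<^sup>2)
      = \<eta>\<^sup>2 * ((1 - \<theta>1 - \<theta>2) + \<theta>1 * (c \<gamma>1)\<^sup>2 + \<theta>2 * (c \<gamma>2)\<^sup>2)"
    by (simp_all add: w_def s_def algebra_simps)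
  then have "(\<Sum>i\<in>{0,1,2}. w i * s i) = 0" "(\<Sum>i\<in>{0,1,2}. w i * (s i)\<^sup>2) = 0"
    using moments \<gamma>1 \<gamma>2 by simp_all
  moreover have "x = y + (- \<eta>) *\<^sub>R u"
    using yx by (simp add: algebra_simps)
  ultimately have "(norm ((1 - \<theta>1 - \<theta>2) *\<^sub>R gradf x
      + \<theta>1 *\<^sub>R gradf (y + ((1 - \<gamma>1) / \<gamma>1) *\<^sub>R (y - x))
      + \<theta>2 *\<^sub>R gradf (y + ((1 - \<gamma>2) / \<gamma>2) *\<^sub>R (y - x)) - gradf y))\<^sup>2
    \<le> 3 * (L\<^sup>2 / 36) * (\<Sum>i\<in>{0,1,2}. (w i)\<^sup>2 * s i ^ 6)"
    using power2_norm_weighted_gradient_taylor[OF \<open>norm u = 1\<close>, of w "{0,1,2}" s y]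
    by (simp add: w_def s_def yx c_def add.assoc)
  also have "\<dots> \<le> 3 * (L\<^sup>2 / 36) * (\<eta> ^ 6 + \<theta>1\<^sup>2 * (\<eta> / \<gamma>1) ^ 6 + \<theta>2\<^sup>2 * (\<eta> / \<gamma>2) ^ 6)"
  proof -
    have "(c \<gamma> * \<eta>) ^ 6 \<le> (\<eta> / \<gamma>) ^ 6" if "0 < \<gamma>" "\<gamma> \<le> 1" for \<gamma>
      using that \<open>0 < \<eta>\<close> by (intro power_mono) (auto simp: c_def field_simps)
    moreover have "(1 - \<theta>1 - \<theta>2)\<^sup>2 \<le> 1"
      using \<open>\<bar>1 - \<theta>1 - \<theta>2\<bar> \<le> 1\<close> by (simp add: abs_square_le_1)
    ultimately have "(\<Sum>i\<in>{0,1,2}. (w i)\<^sup>2 * s i ^ 6)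
        \<le> \<eta> ^ 6 + \<theta>1\<^sup>2 * (\<eta> / \<gamma>1) ^ 6 + \<theta>2\<^sup>2 * (\<eta> / \<gamma>2) ^ 6"
      using \<gamma>1 \<gamma>2
      by (simp add: w_def s_def add.assoc) (intro add_mono mult_left_mono mult_left_le_one_le; simp)
    then show ?thesis
      by (rule mult_left_mono) simp
  qed
  finally show ?thesis
    by (simp add: field_simps)
qed

end

lemma power2_norm_scaleR_add_le:
  fixes w b :: "'a::real_inner"
  assumes "0 < S" "S \<le> 1"
  shows "(norm ((1 - S) *\<^sub>R w + b))\<^sup>2 \<le> (1 - S) * (norm w)\<^sup>2 + (norm b)\<^sup>2 / S"
proof -
  have "(1 - S) * (norm w)\<^sup>2 + (norm b)\<^sup>2 / S - (norm ((1 - S) *\<^sub>R w + b))\<^sup>2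
      = (1 - S) / S * (norm (S *\<^sub>R w - b))\<^sup>2"
    using \<open>0 < S\<close> unfolding power2_norm_eq_inner
    by (simp add: inner_add_left inner_add_right inner_diff_left inner_diff_right
        inner_commute[of b w] field_simps power2_eq_square)
  moreover have "0 \<le> (1 - S) / S * (norm (S *\<^sub>R w - b))\<^sup>2"
    using assms by simp
  ultimately show ?thesis
    by linarith
qed

lemma (in prob_space) mean_square_add_centered_noise:
  fixes A :: "'v::euclidean_space" and X :: "'i \<Rightarrow> 'a \<Rightarrow> 'v" and \<theta> :: "'i \<Rightarrow> real"
  assumes "finite I"
    and integrable: "\<And>i. i \<in> I \<Longrightarrow> integrable M (X i)"
    and mean: "\<And>i. i \<in> I \<Longrightarrow> expectation (X i) = \<mu> i"
    and integrable_sq: "\<And>i. i \<in> I \<Longrightarrow> integrable M (\<lambda>s. (norm (X i s - \<mu> i))\<^sup>2)"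
    and variance: "\<And>i. i \<in> I \<Longrightarrow> expectation (\<lambda>s. (norm (X i s - \<mu> i))\<^sup>2) \<le> v"
  shows "expectation (\<lambda>s. (norm (A + (\<Sum>i\<in>I. \<theta> i *\<^sub>R (X i s - \<mu> i))))\<^sup>2)
    \<le> (norm A)\<^sup>2 + card I * (\<Sum>i\<in>I. (\<theta> i)\<^sup>2) * v"
proof -
  define F where "F = (\<lambda>s. (norm A)\<^sup>2 + 2 * (\<Sum>i\<in>I. \<theta> i * (A \<bullet> (X i s - \<mu> i)))
    + card I * (\<Sum>i\<in>I. (\<theta> i)\<^sup>2 * (norm (X i s - \<mu> i))\<^sup>2))"
  have pointwise: "(norm (A + (\<Sum>i\<in>I. \<theta> i *\<^sub>R (X i s - \<mu> i))))\<^sup>2 \<le> F s" for s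
  proof -
    let ?N = "\<Sum>i\<in>I. \<theta> i *\<^sub>R (X i s - \<mu> i)"
    have "(norm ?N)\<^sup>2 \<le> (\<Sum>i\<in>I. norm (\<theta> i *\<^sub>R (X i s - \<mu> i)))\<^sup>2"
      by (intro power_mono norm_sum) simp
    also have "\<dots> \<le> (\<Sum>i\<in>I. (norm (\<theta> i *\<^sub>R (X i s - \<mu> i)))\<^sup>2) * card I"
      by (rule sum_squared_le_sum_of_squares)
    finally have "(norm ?N)\<^sup>2 \<le> card I * (\<Sum>i\<in>I. (\<theta> i)\<^sup>2 * (norm (X i s - \<mu> i))\<^sup>2)"
      by (simp add: power_mult_distrib mult.commute)
    moreover have "(norm (A + ?N))\<^sup>2 = (norm A)\<^sup>2 + 2 * (A \<bullet> ?N) + (norm ?N)\<^sup>2"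
      by (simp add: power2_norm_eq_inner inner_add inner_commute)
    moreover have "A \<bullet> ?N = (\<Sum>i\<in>I. \<theta> i * (A \<bullet> (X i s - \<mu> i)))"
      by (simp add: inner_sum_right)
    ultimately show ?thesis
      by (simp add: F_def)
  qed
  have centered: "expectation (\<lambda>s. A \<bullet> (X i s - \<mu> i)) = 0" if "i \<in> I" for i
    using integrable[OF that] mean[OF that] by (simp add: prob_space)
  have "integrable M F"
    using integrable integrable_sq by (simp add: F_def)
  then have "expectation (\<lambda>s. (norm (A + (\<Sum>i\<in>I. \<theta> i *\<^sub>R (X i s - \<mu> i))))\<^sup>2)
      \<le> expectation F"
    by (rule integral_mono'[OF _ pointwise]) (meson order.trans zero_le_power2 pointwise)
  also have "expectation F
      = (norm A)\<^sup>2 + card I * (\<Sum>i\<in>I. (\<theta> i)\<^sup>2 * expectation (\<lambda>s. (norm (X i s - \<mu> i))\<^sup>2))"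
    using integrable integrable_sq centered by (simp add: F_def prob_space)
  also have "\<dots> \<le> (norm A)\<^sup>2 + card I * (\<Sum>i\<in>I. (\<theta> i)\<^sup>2 * v)"
    using variance by (intro add_left_mono mult_left_mono sum_mono) simp_all
  also have "\<dots> = (norm A)\<^sup>2 + card I * (\<Sum>i\<in>I. (\<theta> i)\<^sup>2) * v"
    by (simp add: sum_distrib_right)
  finally show ?thesis .
qed

lemma (in prob_space) mean_square_momentum_recursion:
  fixes a B :: "'v::euclidean_space" and X :: "'i \<Rightarrow> 'a \<Rightarrow> 'v" and \<theta> :: "'i \<Rightarrow> real"
  assumes "0 < S" "S \<le> 1" and "(norm B)\<^sup>2 \<le> \<beta>"
    and "finite I"
    and "\<And>i. i \<in> I \<Longrightarrow> integrable M (X i)"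
    and "\<And>i. i \<in> I \<Longrightarrow> expectation (X i) = \<mu> i"
    and "\<And>i. i \<in> I \<Longrightarrow> integrable M (\<lambda>s. (norm (X i s - \<mu> i))\<^sup>2)"
    and "\<And>i. i \<in> I \<Longrightarrow> expectation (\<lambda>s. (norm (X i s - \<mu> i))\<^sup>2) \<le> v"
  shows "expectation (\<lambda>s. (norm ((1 - S) *\<^sub>R a + B + (\<Sum>i\<in>I. \<theta> i *\<^sub>R (X i s - \<mu> i))))\<^sup>2)
    \<le> (1 - S) * (norm a)\<^sup>2 + \<beta> / S + card I * (\<Sum>i\<in>I. (\<theta> i)\<^sup>2) * v"
proof -
  have "expectation (\<lambda>s. (norm ((1 - S) *\<^sub>R a + B + (\<Sum>i\<in>I. \<theta> i *\<^sub>R (X i s - \<mu> i))))\<^sup>2)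
      \<le> (norm ((1 - S) *\<^sub>R a + B))\<^sup>2 + card I * (\<Sum>i\<in>I. (\<theta> i)\<^sup>2) * v"
    using assms(4-) by (rule mean_square_add_centered_noise)
  also have "(norm ((1 - S) *\<^sub>R a + B))\<^sup>2 \<le> (1 - S) * (norm a)\<^sup>2 + (norm B)\<^sup>2 / S"
    using assms(1,2) by (rule power2_norm_scaleR_add_le)
  also have "(norm B)\<^sup>2 / S \<le> \<beta> / S"
    using assms(1,3) by (simp add: divide_right_mono)
  finally show ?thesis
    by simp
qed

lemma sfom_state_fun_upd_after:
  "k < n \<Longrightarrow> sfom_state G x0 eta q gamma theta (xi(n := s)) k = sfom_state G x0 eta q gamma theta xi k"
  by (induction k) (auto simp: Let_def split: prod.splits)

lemma sfom_momentum_error_next: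
  assumes "sfom_state G x0 eta q gamma theta xi k = (x, x', m)"
    and y: "y = x - (eta k / norm m) *\<^sub>R m"
    and z: "\<And>t. z t = y + ((1 - gamma k t) / gamma k t) *\<^sub>R (y - x)"
  defines "S \<equiv> \<Sum>t\<in>{1..q}. theta k t"
  shows "sfom_m G x0 eta q gamma theta (xi(Suc k := s)) (Suc k)
      - gradf (sfom_x G x0 eta q gamma theta (xi(Suc k := s)) (Suc k))
    = (1 - S) *\<^sub>R (m - gradf x)
      + ((1 - S) *\<^sub>R gradf x + (\<Sum>t\<in>{1..q}. theta k t *\<^sub>R gradf (z t)) - gradf y)
      + (\<Sum>t\<in>{1..q}. theta k t *\<^sub>R (G (z t) s - gradf (z t)))"
proof -
  have "sfom_state G x0 eta q gamma theta (xi(Suc k := s)) k = (x, x', m)"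
    using assms(1) by (simp add: sfom_state_fun_upd_after)
  then show ?thesis
    by (simp add: sfom_x_def sfom_m_def Let_def y z S_def sum_subtractf algebra_simps)
qed

theorem lemma3p2:
  fixes f :: "'a::euclidean_space \<Rightarrow> real"
    and gradf :: "'a \<Rightarrow> 'a"
    and D2f :: "'a \<Rightarrow> 'a \<Rightarrow> 'a \<Rightarrow> real"
    and D3f :: "'a \<Rightarrow> 'a \<Rightarrow> 'a \<Rightarrow> 'a \<Rightarrow> real"
    and G :: "'a \<Rightarrow> 'b \<Rightarrow> 'a"
    and M :: "'b measure"
    and f_low L1 L3 \<sigma> :: real
    and x0 :: 'a
    and eta :: "nat \<Rightarrow> real"
    and gamma theta :: "nat \<Rightarrow> nat \<Rightarrow> real"
    and xis :: "nat \<Rightarrow> 'b"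
    and k :: nat
  assumes prob: "prob_space M"
    and A_low: "\<And>x. f x \<ge> f_low"
    and A_grad: "\<And>x. (f has_derivative (\<lambda>h. gradf x \<bullet> h)) (at x)"
    and A_L1: "L1 > 0" and A_lip: "\<And>x y. norm (gradf y - gradf x) \<le> L1 * norm (y - x)"
    and A_sigma: "\<sigma> > 0"
    and A_unbiased: "\<And>x. integrable M (\<lambda>s. G x s) \<and> (\<integral>s. G x s \<partial>M) = gradf x"
    and A_var: "\<And>x. integrable M (\<lambda>s. (norm (G x s - gradf x))\<^sup>2)
                     \<and> (\<integral>s. (norm (G x s - gradf x))\<^sup>2 \<partial>M) \<le> \<sigma>\<^sup>2"
    and B_D2: "\<And>x h1. ((\<lambda>y. gradf y \<bullet> h1) has_derivative D2f x h1) (at x)"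
    and B_D3: "\<And>x h1 h2. ((\<lambda>y. D2f y h1 h2) has_derivative D3f x h1 h2) (at x)"
    and B_L3: "L3 > 0"
    and B_lip: "\<And>x y h1 h2 h3. norm h1 \<le> 1 \<Longrightarrow> norm h2 \<le> 1 \<Longrightarrow> norm h3 \<le> 1 \<Longrightarrow>
                  D3f y h1 h2 h3 - D3f x h1 h2 h3 \<le> L3 * norm (y - x)"
    and eta_pos: "\<And>j. eta j > 0"
    and gamma_range: "\<And>j t. t \<in> {1, 2} \<Longrightarrow> 0 < gamma j t \<and> gamma j t < 1"
    and par1: "\<And>j. theta j 1 / gamma j 1 + theta j 2 / gamma j 2 = 1"
    and par2: "\<And>j. theta j 1 / (gamma j 1)\<^sup>2 + theta j 2 / (gamma j 2)\<^sup>2 = 1"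
    and par3: "\<And>j. 0 < theta j 1 + theta j 2 \<and> theta j 1 + theta j 2 < 1"
    and m_nonzero: "sfom_m G x0 eta 2 gamma theta xis k \<noteq> 0"
  shows "(\<integral>s. (norm (sfom_m G x0 eta 2 gamma theta (xis(Suc k := s)) (Suc k)
                     - gradf (sfom_x G x0 eta 2 gamma theta (xis(Suc k := s)) (Suc k))))\<^sup>2 \<partial>M)
         \<le> (1 - theta k 1 - theta k 2)
              * (norm (sfom_m G x0 eta 2 gamma theta xis k - gradf (sfom_x G x0 eta 2 gamma theta xis k)))\<^sup>2
           + L3\<^sup>2 * (eta k)^6 * (theta k 1)\<^sup>2 / (12 * (gamma k 1)^6 * (theta k 1 + theta k 2))
           + L3\<^sup>2 * (eta k)^6 * (theta k 2)\<^sup>2 / (12 * (gamma k 2)^6 * (theta k 1 + theta k 2))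
           + L3\<^sup>2 * (eta k)^6 / (12 * (theta k 1 + theta k 2))
           + 2 * ((theta k 1)\<^sup>2 + (theta k 2)\<^sup>2) * \<sigma>\<^sup>2"
proof -
  interpret prob_space M
    by (rule prob)
  interpret lipschitz_third_derivative gradf D2f D3f L3
    using B_D2 B_D3 B_lip by unfold_locales
  obtain x x' m where st: "sfom_state G x0 eta 2 gamma theta xis k = (x, x', m)"
    by (metis prod_cases3)
  define S where "S = theta k 1 + theta k 2"
  define y where "y = x - (eta k / norm m) *\<^sub>R m"
  define z where "z t = y + ((1 - gamma k t) / gamma k t) *\<^sub>R (y - x)" for t
  define B where "B = (1 - theta k 1 - theta k 2) *\<^sub>R gradf x
    + theta k 1 *\<^sub>R gradf (z 1) + theta k 2 *\<^sub>R gradf (z 2) - gradf y"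
  have "{1..2::nat} = {1, 2}"
    by auto
  with sfom_momentum_error_next[OF st y_def z_def, where gradf = gradf]
  have error_split: "sfom_m G x0 eta 2 gamma theta (xis(Suc k := s)) (Suc k)
      - gradf (sfom_x G x0 eta 2 gamma theta (xis(Suc k := s)) (Suc k))
      = (1 - S) *\<^sub>R (m - gradf x) + B + (\<Sum>t\<in>{1,2}. theta k t *\<^sub>R (G (z t) s - gradf (z t)))" for s
    by (simp add: B_def S_def algebra_simps)
  have "m \<noteq> 0"
    using m_nonzero st by (simp add: sfom_m_def)
  then have "norm (y - x) = eta k"
    using eta_pos[of k] by (simp add: y_def)
  then have "(norm B)\<^sup>2 \<le> L3\<^sup>2 * (eta k) ^ 6 * (theta k 1)\<^sup>2 / (12 * (gamma k 1) ^ 6)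
      + L3\<^sup>2 * (eta k) ^ 6 * (theta k 2)\<^sup>2 / (12 * (gamma k 2) ^ 6) + L3\<^sup>2 * (eta k) ^ 6 / 12"
    unfolding B_def z_def
    using gamma_range[of 1 k] gamma_range[of 2 k] par1[of k] par2[of k] par3[of k] eta_pos[of k]
    by (intro two_point_extrapolation_bias) auto
  from mean_square_momentum_recursion[where I = "{1, 2}" and X = "\<lambda>t. G (z t)"
      and \<mu> = "\<lambda>t. gradf (z t)" and v = "\<sigma>\<^sup>2", OF _ _ this]
  have "(\<integral>s. (norm ((1 - S) *\<^sub>R (m - gradf x) + B
        + (\<Sum>t\<in>{1,2}. theta k t *\<^sub>R (G (z t) s - gradf (z t)))))\<^sup>2 \<partial>M)
      \<le> (1 - S) * (norm (m - gradf x))\<^sup>2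
        + (L3\<^sup>2 * (eta k) ^ 6 * (theta k 1)\<^sup>2 / (12 * (gamma k 1) ^ 6)
          + L3\<^sup>2 * (eta k) ^ 6 * (theta k 2)\<^sup>2 / (12 * (gamma k 2) ^ 6) + L3\<^sup>2 * (eta k) ^ 6 / 12) / S
        + 2 * ((theta k 1)\<^sup>2 + (theta k 2)\<^sup>2) * \<sigma>\<^sup>2"
    using par3[of k] A_unbiased A_var by (simp add: S_def)
  moreover have "sfom_m G x0 eta 2 gamma theta xis k = m" "sfom_x G x0 eta 2 gamma theta xis k = x"
    using st by (simp_all add: sfom_m_def sfom_x_def)
  ultimately show ?thesis
    by (simp add: error_split S_def add_divide_distrib diff_diff_eq)
qed

end
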